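(* Let $G$ be a finite group with an abelian normal subgroup $A$ such that $G/A$ is cyclic, and let $s$ be an automorphism of $G$ of order $2$ with $s(A)=A$. Suppose there is a subgroup $H\le G$ with $H\cap A=\{1\}$ and $G = s(H)H$. Then $A$ has a cyclic subgroup of index at most $2$.
   Context: $s(H)H$ denotes the set of products $ab$ with $a\in s(H)$, $b\in H$. *)

theory Defs
  imports "HOL-Algebra.Algebra"
begin

end

(* Let K = s(H) and n = |H| = |K|. As G/A is abelian and G = KH, every element
   of G/A has order dividing n, and since G/A is cyclic, |G/A| <= n. Both K and H
   meet A trivially, so both map bijectively onto G/A. Hence K is cyclic, generated
   by some k, and k = b h with h in H and b in A. With psi the conjugation by k, the
   elements c_t = k^t h^-t = psi^(t-1)(b) ... psi(b) b exhaust A (each a in A is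
   k^t h' with h' in H, and c_t^-1 a lies in both H and A), so A is the orbit of 1
   under the affine map y -> psi(y) b.

   For such an affine orbit S in a finite abelian group, |S| <= 2 |<b>| by induction
   on |S|. The homomorphism delta(y) = psi(y) y^-1 has as kernel the fixed points F
   of psi, and delta(S) is the affine orbit of delta(b); so |S| = |F| m with
   m = |delta(S)|. F is generated by c_m = b^m P, where P is the product of all
   elements of delta(S) and P^2 = 1; hence c_m^2 is a power of b and
   |F| <= 2 |<b> cap F|. If <delta b> = delta(S) this gives the bound, since
   |<b>| = |<b> cap F| |<delta b>|. Otherwise, by induction, <delta b> has index 2
   in delta(S); as |<delta b>| is an exponent of delta(S), this forces P = 1, so
   F is contained in <b> and again |S| <= 2 |<b>|. *)

theory Submission
  imports Defs
begin

lemma inj_on_funpow: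
  assumes "inj_on f S" and "f ` S \<subseteq> S"
  shows "inj_on (f ^^ n) S"
proof (induction n)
  case (Suc n)
  have "inj_on (f ^^ n \<circ> f) S"
    using Suc assms by (intro comp_inj_on) (auto intro: inj_on_subset)
  then show ?case
    by (simp only: funpow_Suc_right)
qed simp

lemma funpow_card_orbit_eq:
  assumes "finite S" and "f ` S \<subseteq> S" and "inj_on f S" and S: "S = range (\<lambda>t. (f ^^ t) x)"
  shows "(f ^^ card S) x = x"
proof -
  define c where "c t = (f ^^ t) x" for t
  have c_in: "c t \<in> S" for t
    using S c_def by blast
  have "\<not> inj_on c {..card S}"
  proof
    assume "inj_on c {..card S}"
    then have "card (c ` {..card S}) = Suc (card S)"
      by (simp add: card_image)
    moreover have "card (c ` {..card S}) \<le> card S"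
      using c_in by (intro card_mono[OF \<open>finite S\<close>]) auto
    ultimately show False by simp
  qed
  then obtain i j where ij: "i < j" "j \<le> card S" "c i = c j"
    unfolding inj_on_def by (metis atMost_iff linorder_neqE_nat)
  define p where "p = j - i"
  have "(f ^^ i) ((f ^^ p) x) = (f ^^ i) x"
    using ij funpow_add[of i p f] by (simp add: c_def p_def)
  then have p: "c p = x"
    using inj_onD[OF inj_on_funpow[OF assms(3,2)]] c_in by (metis c_def funpow_0)
  have "S = c ` {..<p}"
  proof -
    have "c t = c (t mod p)" for t
      using p by (simp add: c_def funpow_mod_eq)
    moreover have "p > 0" using ij p_def by simp
    ultimately have "c t \<in> c ` {..<p}" for t
      by (metis image_eqI lessThan_iff mod_less_divisor)
    then show ?thesis
      using S c_def by auto
  qed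
  then have "card S \<le> p"
    using card_image_le by (metis card_lessThan finite_lessThan)
  then have "p = card S"
    using ij p_def by linarith
  then show ?thesis using p c_def by simp
qed

lemma inj_on_funpow_card_orbit:
  assumes "finite S" and "f ` S \<subseteq> S" and "inj_on f S" and S: "S = range (\<lambda>t. (f ^^ t) x)"
  shows "inj_on (\<lambda>t. (f ^^ t) x) {..<card S}"
proof (rule eq_card_imp_inj_on)
  have "(f ^^ t) x = (f ^^ (t mod card S)) x" for t
    using funpow_card_orbit_eq[OF assms] by (simp add: funpow_mod_eq)
  moreover have "card S > 0"
    using assms(1) S card_gt_0_iff by blast
  ultimately have "(f ^^ t) x \<in> (\<lambda>t. (f ^^ t) x) ` {..<card S}" for t
    by (metis image_eqI lessThan_iff mod_less_divisor)
  then have "S = (\<lambda>t. (f ^^ t) x) ` {..<card S}"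
    using S by auto
  then show "card ((\<lambda>t. (f ^^ t) x) ` {..<card S}) = card {..<card S}"
    by simp
qed simp

lemma (in group) subgroup_nat_pow_closed:
  "subgroup H G \<Longrightarrow> x \<in> H \<Longrightarrow> x [^] (n::nat) \<in> H"
  using subgroup_int_pow_closed[of H x "int n"] by (simp add: int_pow_int)

lemma (in group) pow_in_generate:
  "finite (carrier G) \<Longrightarrow> x \<in> carrier G \<Longrightarrow> x [^] (n::nat) \<in> generate G {x}"
  using generate_pow_on_finite_carrier by blast

lemma (in group) ord_le_twice_ord_square:
  assumes "x \<in> carrier G" shows "ord x \<le> 2 * ord (x [^] (2::nat))"
proof -
  have "gcd (ord x) 2 \<le> 2"
    by (simp add: dvd_imp_le)
  then have "ord x \<le> 2 * (ord x div gcd (ord x) 2)"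
    by (metis dvd_mult_div_cancel gcd_dvd1 mult_le_mono1)
  then show ?thesis
    using ord_pow_gen[OF assms, of 2] by simp
qed

lemma (in group) pow_card_subgroup_eq_one:
  assumes "subgroup K G" "x \<in> K" shows "x [^] card K = \<one>"
  using group.pow_order_eq_1[OF subgroup.subgroup_is_group[OF assms(1) is_group], of x] assms(2)
  by (simp add: order_def nat_pow_consistent[symmetric])

lemma (in group) r_coset_eq_iff:
  assumes "subgroup A G" "x \<in> carrier G" "y \<in> carrier G"
  shows "A #> x = A #> y \<longleftrightarrow> x \<otimes> inv y \<in> A"
  by (metis assms repr_independence repr_independenceD subgroup.rcos_module is_group)

lemma (in group) inv_mult_cancel_left:
  "x \<in> carrier G \<Longrightarrow> y \<in> carrier G \<Longrightarrow> inv x \<otimes> (x \<otimes> y) = y"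
  by (simp add: m_assoc[symmetric])

lemma (in normal) group_hom_r_coset: "group_hom G (G Mod H) (\<lambda>g. H #> g)"
  using r_coset_hom_Mod factorgroup_is_group
  by (simp add: group_hom_def group_hom_axioms_def is_group)

lemma (in group) cyclic_group_subgroup_generated_generate:
  assumes "x \<in> carrier G" shows "cyclic_group (subgroup_generated G (generate G {x}))"
proof -
  have "generate G (carrier G \<inter> generate G {x}) = generate G (carrier G \<inter> {x})"
    using subgroup.carrier_subgroup_generated_subgroup[OF generate_is_subgroup] assms
    by (simp add: carrier_subgroup_generated)
  then have "subgroup_generated G (generate G {x}) = subgroup_generated G {x}"
    by (simp add: subgroup_generated_def)
  then show ?thesis
    by (simp add: cyclic_group_generated)
qed

lemma (in group_hom) card_kernel_mult_card_image:
  assumes "finite (carrier G)"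
  shows "card (kernel G H h) * card (h ` carrier G) = order G"
proof -
  let ?I = "H\<lparr>carrier := h ` carrier G\<rparr>"
  interpret I: group_hom G ?I h
    using img_is_subgroup subgroup.subgroup_is_group[OF _ H.group_axioms] homh
    by (auto simp: group_hom_def group_hom_axioms_def G.group_axioms hom_def)
  have "kernel G ?I h = kernel G H h"
    by (simp add: kernel_def)
  moreover have "G Mod kernel G ?I h \<cong> ?I"
    by (rule I.FactGroup_iso) simp
  ultimately have "card (rcosets (kernel G H h)) = card (h ` carrier G)"
    using iso_same_card unfolding FactGroup_def by fastforce
  then show ?thesis
    using G.lagrange[OF subgroup_kernel] by (simp add: mult.commute)
qed

lemma (in comm_group) finprod_subgroup_square:
  assumes "subgroup Q G" and "finite Q"
  shows "(\<Otimes>x\<in>Q. x) \<otimes> (\<Otimes>x\<in>Q. x) = \<one>"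
proof -
  interpret Q: subgroup Q G by fact
  have "(\<lambda>x. inv x) ` Q = Q"
    using Q.m_inv_closed by (force intro: image_eqI[of _ "\<lambda>x. inv x" "inv _"])
  moreover have "inj_on (\<lambda>x. inv x) Q"
    by (metis inj_on_def Q.mem_carrier inv_inv)
  ultimately have inv_prod: "(\<Otimes>x\<in>Q. x) = (\<Otimes>x\<in>Q. inv x)"
    using finprod_reindex[of "\<lambda>x. x" "\<lambda>x. inv x" Q] by auto
  have "(\<Otimes>x\<in>Q. x) \<otimes> (\<Otimes>x\<in>Q. inv x) = (\<Otimes>x\<in>Q. x \<otimes> inv x)"
    by (simp add: finprod_multf Pi_iff)
  also have "\<dots> = \<one>"
    by (rule finprod_one_eqI) simp
  finally show ?thesis
    by (simp only: inv_prod[symmetric])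
qed

lemma (in comm_group) finprod_subgroup_eq_one:
  assumes D: "subgroup D G" "finite D" and E: "subgroup E G" "E \<subseteq> D"
    and card_E: "card E < card D" "card D \<le> 2 * card E"
    and exponent: "\<And>y. y \<in> D \<Longrightarrow> y [^] card E = \<one>"
  shows "(\<Otimes>x\<in>D. x) = \<one>"
proof -
  interpret D: subgroup D G by (fact D(1))
  interpret E: subgroup E G by (fact E(1))
  have finite_E: "finite E"
    using finite_subset[OF E(2) D(2)] .
  have "\<not> D \<subseteq> E"
    using card_mono[OF finite_E] card_E(1) by (meson leD)
  then obtain y where y: "y \<in> D" "y \<notin> E"
    by blast
  let ?yE = "(\<lambda>x. y \<otimes> x) ` E"
  have inj: "inj_on (\<lambda>x. y \<otimes> x) E"
    using y by (auto intro!: inj_onI simp: E.mem_carrier D.mem_carrier)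
  have "y \<otimes> x \<notin> E" if "x \<in> E" for x
  proof
    assume "y \<otimes> x \<in> E"
    then have "y \<otimes> x \<otimes> inv x \<in> E"
      using that by simp
    then show False
      using y that by (simp add: m_assoc D.mem_carrier E.mem_carrier)
  qed
  then have disjoint: "E \<inter> ?yE = {}"
    by auto
  have "E \<union> ?yE = D"
  proof (rule card_seteq[OF D(2)])
    show "E \<union> ?yE \<subseteq> D"
      using E(2) y D.m_closed by auto
    show "card D \<le> card (E \<union> ?yE)"
      using card_E(2) disjoint inj finite_E by (simp add: card_Un_disjoint card_image)
  qed
  moreover have "(\<Otimes>x\<in>?yE. x) = y [^] card E \<otimes> (\<Otimes>x\<in>E. x)"
    using inj y by (simp add: finprod_reindex finprod_multf finprod_const Pi_iff D.mem_carrier E.mem_carrier)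
  moreover have "(\<Otimes>x\<in>E \<union> ?yE. x) = (\<Otimes>x\<in>E. x) \<otimes> (\<Otimes>x\<in>?yE. x)"
    using disjoint finite_E y by (intro finprod_Un_disjoint) (auto simp: E.mem_carrier D.mem_carrier)
  ultimately have "(\<Otimes>x\<in>D. x) = (\<Otimes>x\<in>E. x) \<otimes> (\<Otimes>x\<in>E. x)"
    using exponent[OF y(1)] by (simp add: m_ac)
  then show ?thesis
    using finprod_subgroup_square[OF E(1) finite_E] by simp
qed

section \<open>Affine orbits in finite abelian groups\<close>

definition twisted_pow :: "('a, 'b) monoid_scheme \<Rightarrow> ('a \<Rightarrow> 'a) \<Rightarrow> 'a \<Rightarrow> nat \<Rightarrow> 'a" where
  "twisted_pow M \<psi> b t = ((\<lambda>y. \<psi> y \<otimes>\<^bsub>M\<^esub> b) ^^ t) \<one>\<^bsub>M\<^esub>"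

lemma twisted_pow_0 [simp]: "twisted_pow M \<psi> b 0 = \<one>\<^bsub>M\<^esub>"
  by (simp add: twisted_pow_def)

lemma twisted_pow_Suc [simp]: "twisted_pow M \<psi> b (Suc t) = \<psi> (twisted_pow M \<psi> b t) \<otimes>\<^bsub>M\<^esub> b"
  by (simp add: twisted_pow_def)

locale affine_orbit = comm_group G for G (structure) +
  fixes S :: "'a set" and \<psi> :: "'a \<Rightarrow> 'a" and b :: 'a
  assumes finite_carrier: "finite (carrier G)"
    and subgroup_S: "subgroup S G"
    and psi_closed: "\<And>x. x \<in> S \<Longrightarrow> \<psi> x \<in> S"
    and psi_mult: "\<And>x y. x \<in> S \<Longrightarrow> y \<in> S \<Longrightarrow> \<psi> (x \<otimes> y) = \<psi> x \<otimes> \<psi> y"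
    and inj_on_psi: "inj_on \<psi> S"
    and b_in_S: "b \<in> S"
    and S_eq_orbit: "S = range (twisted_pow G \<psi> b)"
begin

sublocale S: subgroup S G
  by (rule subgroup_S)

abbreviation orb :: "nat \<Rightarrow> 'a" where
  "orb \<equiv> twisted_pow G \<psi> b"

lemma finite_S: "finite S"
  using finite_subset[OF S.subset finite_carrier] .

lemma orb_in_S: "orb t \<in> S"
  using S_eq_orbit by blast

lemma obtain_orb:
  assumes "x \<in> S" obtains t where "x = orb t"
  using assms S_eq_orbit by blast

lemma orb_in_carrier: "orb t \<in> carrier G"
  using orb_in_S S.mem_carrier by blast

lemma b_in_carrier: "b \<in> carrier G"
  using b_in_S by (rule S.mem_carrier)

lemma finite_generate: "x \<in> carrier G \<Longrightarrow> finite (generate G {x})"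
  using finite_subset[OF generate_incl finite_carrier] by simp

lemma psi_one: "\<psi> \<one> = \<one>"
proof -
  have "\<psi> \<one> \<otimes> \<psi> \<one> = \<psi> \<one> \<otimes> \<one>"
    using psi_mult[OF S.one_closed S.one_closed] psi_closed[OF S.one_closed] by simp
  then show ?thesis
    using psi_closed[OF S.one_closed] by (simp add: l_cancel)
qed

lemma psi_inv:
  assumes "x \<in> S" shows "\<psi> (inv x) = inv (\<psi> x)"
proof -
  have "\<psi> x \<otimes> \<psi> (inv x) = \<one>"
    using assms psi_mult[of x "inv x"] by (simp add: S.m_inv_closed psi_one)
  then show ?thesis
    by (metis comm_inv_char S.mem_carrier psi_closed S.m_inv_closed assms)
qed

lemma psi_pow: "x \<in> S \<Longrightarrow> \<psi> (x [^] (n::nat)) = \<psi> x [^] n"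
  by (induction n) (simp_all add: psi_one psi_mult subgroup_nat_pow_closed[OF subgroup_S])

lemma orb_card_eq_one: "orb (card S) = \<one>"
  and inj_on_orb: "inj_on orb {..<card S}"
proof -
  let ?f = "\<lambda>y. \<psi> y \<otimes> b"
  have "?f ` S \<subseteq> S"
    using psi_closed b_in_S by auto
  moreover have "inj_on ?f S"
    using inj_on_psi psi_closed b_in_S by (auto simp: inj_on_def S.mem_carrier)
  moreover have "S = range (\<lambda>t. (?f ^^ t) \<one>)"
    using S_eq_orbit by (simp add: twisted_pow_def)
  ultimately have "(?f ^^ card S) \<one> = \<one>" "inj_on (\<lambda>t. (?f ^^ t) \<one>) {..<card S}"
    using funpow_card_orbit_eq[OF finite_S] inj_on_funpow_card_orbit[OF finite_S] by blast+
  then show "orb (card S) = \<one>" "inj_on orb {..<card S}"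
    by (simp_all add: twisted_pow_def[abs_def])
qed

lemma card_S_pos: "card S > 0"
  using finite_S S.one_closed card_gt_0_iff by blast

lemma orb_mod: "orb (t mod card S) = orb t"
  using orb_card_eq_one by (simp add: twisted_pow_def funpow_mod_eq)

lemma orb_image: "orb ` {..<card S} = S"
proof -
  have "orb t \<in> orb ` {..<card S}" for t
    using orb_mod[of t] card_S_pos by (metis image_eqI lessThan_iff mod_less_divisor)
  then show ?thesis
    using S_eq_orbit by auto
qed

lemma orb_eq_one_iff: "orb t = \<one> \<longleftrightarrow> card S dvd t"
proof
  assume "orb t = \<one>"
  then have "orb (t mod card S) = orb 0"
    by (simp add: orb_mod)
  moreover have "t mod card S \<in> {..<card S}" "0 \<in> {..<card S}"
    using card_S_pos by auto
  ultimately have "t mod card S = 0"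
    by (rule inj_onD[OF inj_on_orb])
  then show "card S dvd t"
    by (simp add: dvd_eq_mod_eq_0)
next
  assume "card S dvd t"
  then have "t mod card S = 0"
    by simp
  then show "orb t = \<one>"
    using orb_mod[of t] by simp
qed

lemma pow_ord_b_eq_one:
  assumes "y \<in> S" shows "y [^] ord b = \<one>"
proof -
  have "orb t [^] ord b = \<one>" for t
  proof (induction t)
    case (Suc t)
    have "orb (Suc t) [^] ord b = \<psi> (orb t) [^] ord b \<otimes> b [^] ord b"
      using orb_in_S psi_closed b_in_S by (simp add: nat_pow_distrib S.mem_carrier)
    also have "\<dots> = \<one>"
      using Suc orb_in_S b_in_S by (simp add: psi_pow[symmetric] psi_one S.mem_carrier pow_ord_eq_1)
    finally show ?case .
  qed simp
  then show ?thesis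
    using assms S_eq_orbit by blast
qed

definition delta :: "'a \<Rightarrow> 'a" where
  "delta y = \<psi> y \<otimes> inv y"

lemma delta_closed: "x \<in> S \<Longrightarrow> delta x \<in> S"
  by (simp add: delta_def psi_closed)

lemma delta_mult:
  assumes "x \<in> S" "y \<in> S" shows "delta (x \<otimes> y) = delta x \<otimes> delta y"
  using assms psi_closed
  by (simp add: delta_def psi_mult S.mem_carrier inv_mult m_ac)

lemma psi_eq_delta_mult: "x \<in> S \<Longrightarrow> \<psi> x = delta x \<otimes> x"
  by (simp add: delta_def psi_closed S.mem_carrier m_assoc)

lemma delta_eq_one_iff: "x \<in> S \<Longrightarrow> delta x = \<one> \<longleftrightarrow> \<psi> x = x"
  by (metis delta_def psi_eq_delta_mult psi_closed S.mem_carrier l_one r_inv)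

lemma psi_delta: "x \<in> S \<Longrightarrow> \<psi> (delta x) = delta (\<psi> x)"
  by (simp add: delta_def psi_mult psi_inv psi_closed)

lemma group_hom_delta:
  assumes "subgroup Q G" "Q \<subseteq> S" shows "group_hom (G\<lparr>carrier := Q\<rparr>) G delta"
proof -
  have "delta \<in> hom (G\<lparr>carrier := Q\<rparr>) G"
  proof (rule homI)
    show "delta x \<in> carrier G" if "x \<in> carrier (G\<lparr>carrier := Q\<rparr>)" for x
      using that assms(2) delta_closed S.mem_carrier by auto
    show "delta (x \<otimes>\<^bsub>G\<lparr>carrier := Q\<rparr>\<^esub> y) = delta x \<otimes> delta y"
      if "x \<in> carrier (G\<lparr>carrier := Q\<rparr>)" "y \<in> carrier (G\<lparr>carrier := Q\<rparr>)" for x y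
    proof -
      have "x \<in> S" "y \<in> S"
        using that assms(2) by auto
      then show ?thesis
        by (simp add: delta_mult)
    qed
  qed
  then show ?thesis
    using subgroup.subgroup_is_group[OF assms(1) is_group]
    by (simp add: group_hom_def group_hom_axioms_def is_group)
qed

lemma subgroup_delta_image: "subgroup (delta ` S) G"
  using group_hom.img_is_subgroup[OF group_hom_delta[OF subgroup_S subset_refl]] by simp

lemma delta_one: "delta \<one> = \<one>"
  by (simp add: delta_def psi_one)

lemma orb_delta: "twisted_pow G \<psi> (delta b) t = delta (orb t)"
proof (induction t)
  case (Suc t)
  then show ?case
    using orb_in_S psi_closed b_in_S by (simp add: delta_mult psi_delta)
qed (simp add: delta_one)

lemma affine_orbit_delta: "affine_orbit G (delta ` S) \<psi> (delta b)"
proof (rule affine_orbit.intro[OF comm_group_axioms affine_orbit_axioms.intro])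
  show "\<psi> (x \<otimes> y) = \<psi> x \<otimes> \<psi> y" if "x \<in> delta ` S" "y \<in> delta ` S" for x y
    using that delta_closed psi_mult by auto
  show "\<psi> x \<in> delta ` S" if "x \<in> delta ` S" for x
    using that psi_closed psi_delta by auto
  show "inj_on \<psi> (delta ` S)"
    by (rule inj_on_subset[OF inj_on_psi]) (auto intro: delta_closed)
  show "delta ` S = range (twisted_pow G \<psi> (delta b))"
    using S_eq_orbit by (auto simp: orb_delta)
qed (use finite_carrier subgroup_delta_image b_in_S in auto)

definition fixed :: "'a set" where
  "fixed = {x \<in> S. \<psi> x = x}"

lemma kernel_delta:
  assumes "subgroup Q G" "Q \<subseteq> S" shows "kernel (G\<lparr>carrier := Q\<rparr>) G delta = Q \<inter> fixed"
  using assms delta_eq_one_iff by (auto simp: kernel_def fixed_def)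

lemma kernel_delta_S: "kernel (G\<lparr>carrier := S\<rparr>) G delta = fixed"
  using kernel_delta[OF subgroup_S subset_refl] by (auto simp: fixed_def)

lemma subgroup_fixed: "subgroup fixed G"
  using group_hom.subgroup_kernel[OF group_hom_delta[OF subgroup_S subset_refl]]
    incl_subgroup[OF subgroup_S] kernel_delta_S
  by simp

lemma card_S_eq_card_fixed_mult: "card S = card fixed * card (delta ` S)"
  using group_hom.card_kernel_mult_card_image[OF group_hom_delta[OF subgroup_S subset_refl]]
    kernel_delta_S finite_S
  by (simp add: order_def)

lemma card_generate_b_eq:
  "card (generate G {b}) = card (generate G {b} \<inter> fixed) * card (generate G {delta b})"
proof -
  let ?B = "generate G {b}"
  have B: "subgroup ?B G" "?B \<subseteq> S"
    using b_in_S generate_is_subgroup generate_subgroup_incl[OF _ subgroup_S] by auto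
  have "delta ` ?B = generate G {delta b}"
    using group_hom.generate_img[OF group_hom_delta[OF subgroup_S subset_refl], of "{b}"]
      generate_consistent[OF _ subgroup_S, of "{b}"] b_in_S by simp
  moreover have "finite ?B"
    using B finite_S finite_subset by blast
  ultimately show ?thesis
    using group_hom.card_kernel_mult_card_image[OF group_hom_delta[OF B]] kernel_delta[OF B]
    by (simp add: order_def)
qed

lemma orb_card_delta_image_fixed: "orb (card (delta ` S)) \<in> fixed"
proof -
  interpret D: affine_orbit G "delta ` S" \<psi> "delta b"
    by (rule affine_orbit_delta)
  show ?thesis
    using D.orb_card_eq_one orb_in_S delta_eq_one_iff by (simp add: fixed_def orb_delta)
qed

lemma orb_mult_card_delta_image:
  "orb (k * card (delta ` S)) = orb (card (delta ` S)) [^] k"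
proof -
  let ?m = "card (delta ` S)"
  have add: "orb (t + ?m) = orb t \<otimes> orb ?m" for t
  proof (induction t)
    case (Suc t)
    have "\<psi> (orb ?m) = orb ?m"
      using orb_card_delta_image_fixed by (simp add: fixed_def)
    with Suc show ?case
      using orb_in_S psi_closed b_in_S by (simp add: psi_mult S.mem_carrier m_ac)
  qed (simp add: orb_in_carrier)
  show ?thesis
  proof (induction k)
    case (Suc k)
    have "orb (Suc k * ?m) = orb (k * ?m + ?m)"
      by (simp add: add.commute)
    with Suc show ?case
      by (simp add: add orb_in_carrier)
  qed simp
qed

lemma fixed_subset_generate: "fixed \<subseteq> generate G {orb (card (delta ` S))}"
proof
  interpret D: affine_orbit G "delta ` S" \<psi> "delta b"
    by (rule affine_orbit_delta)
  fix y assume y: "y \<in> fixed"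
  then obtain j where j: "y = orb j" "delta (orb j) = \<one>"
    using delta_eq_one_iff by (auto simp: fixed_def elim: obtain_orb)
  then obtain k where "j = k * card (delta ` S)"
    using D.orb_eq_one_iff by (metis orb_delta dvdE mult.commute)
  then have "y = orb (card (delta ` S)) [^] k"
    using j orb_mult_card_delta_image by simp
  then show "y \<in> generate G {orb (card (delta ` S))}"
    using generate_pow_on_finite_carrier[OF finite_carrier orb_in_carrier] by auto
qed

lemma orb_eq_pow_mult_finprod:
  "orb t = b [^] t \<otimes> (\<Otimes>i\<in>{..<t}. twisted_pow G \<psi> (delta b) i)"
proof (induction t)
  case (Suc t)
  interpret D: affine_orbit G "delta ` S" \<psi> "delta b"
    by (rule affine_orbit_delta)
  let ?P = "\<Otimes>i\<in>{..<t}. D.orb i"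
  have P: "?P \<in> carrier G"
    using D.orb_in_carrier by (simp add: Pi_iff)
  have "orb (Suc t) = D.orb t \<otimes> orb t \<otimes> b"
    using psi_eq_delta_mult orb_in_S by (simp add: orb_delta)
  also have "\<dots> = D.orb t \<otimes> (b [^] t \<otimes> ?P) \<otimes> b"
    by (simp only: Suc.IH)
  also have "\<dots> = b [^] Suc t \<otimes> (D.orb t \<otimes> ?P)"
    using P D.orb_in_carrier b_in_S by (simp add: m_ac S.mem_carrier)
  also have "D.orb t \<otimes> ?P = (\<Otimes>i\<in>{..<Suc t}. D.orb i)"
    using D.orb_in_carrier by (simp add: lessThan_Suc Pi_iff)
  finally show ?case .
qed simp

lemma orb_card_delta_image:
  "orb (card (delta ` S)) = b [^] card (delta ` S) \<otimes> (\<Otimes>x\<in>delta ` S. x)"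
proof -
  interpret D: affine_orbit G "delta ` S" \<psi> "delta b"
    by (rule affine_orbit_delta)
  have "(\<Otimes>x\<in>delta ` S. x) = (\<Otimes>i\<in>{..<card (delta ` S)}. D.orb i)"
    using finprod_reindex[OF _ D.inj_on_orb] D.orb_image D.orb_in_carrier by auto
  then show ?thesis
    using orb_eq_pow_mult_finprod by simp
qed

lemma orb_card_delta_image_square:
  "orb (card (delta ` S)) [^] (2::nat) = b [^] (2 * card (delta ` S))"
proof -
  let ?P = "\<Otimes>x\<in>delta ` S. x"
  let ?c = "b [^] card (delta ` S)"
  have P: "?P \<in> carrier G" "?P \<otimes> ?P = \<one>"
    using finprod_subgroup_square[OF subgroup_delta_image finite_subset[OF _ finite_S]]
      delta_closed by (auto simp: Pi_iff S.mem_carrier)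
  have "orb (card (delta ` S)) [^] (2::nat) = (?c \<otimes> ?P) \<otimes> (?c \<otimes> ?P)"
    using P b_in_carrier by (simp add: orb_card_delta_image numeral_2_eq_2)
  also have "\<dots> = (?c \<otimes> ?c) \<otimes> (?P \<otimes> ?P)"
    using P(1) b_in_carrier by (simp add: m_ac)
  also have "\<dots> = b [^] (2 * card (delta ` S))"
    using P b_in_carrier by (simp add: nat_pow_mult mult_2)
  finally show ?thesis .
qed

lemma card_fixed_le: "card fixed \<le> 2 * card (generate G {b} \<inter> fixed)"
proof -
  let ?g = "orb (card (delta ` S))"
  have g: "?g \<in> carrier G" "?g [^] (2::nat) \<in> carrier G"
    using orb_in_carrier by auto
  have "card fixed \<le> ord ?g"
    using card_mono[OF _ fixed_subset_generate] generate_pow_card[OF g(1)]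
      finite_generate g by auto
  also have "\<dots> \<le> 2 * ord (?g [^] (2::nat))"
    by (rule ord_le_twice_ord_square[OF g(1)])
  also have "ord (?g [^] (2::nat)) \<le> card (generate G {b} \<inter> fixed)"
  proof -
    have "?g [^] (2::nat) \<in> generate G {b}"
      using orb_card_delta_image_square pow_in_generate[OF finite_carrier b_in_carrier] by simp
    moreover have "?g [^] (2::nat) \<in> fixed"
      using subgroup_nat_pow_closed[OF subgroup_fixed orb_card_delta_image_fixed] .
    ultimately have "generate G {?g [^] (2::nat)} \<subseteq> generate G {b} \<inter> fixed"
      using subgroups_Inter_pair[OF generate_is_subgroup subgroup_fixed] b_in_carrier
      by (intro generate_subgroup_incl) auto
    then have "card (generate G {?g [^] (2::nat)}) \<le> card (generate G {b} \<inter> fixed)"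
      by (rule card_mono[rotated]) (simp add: finite_generate b_in_carrier)
    then show ?thesis
      using generate_pow_card[OF g(2)] by simp
  qed
  finally show ?thesis by simp
qed

lemma fixed_subset_generate_b:
  assumes "(\<Otimes>x\<in>delta ` S. x) = \<one>" shows "fixed \<subseteq> generate G {b}"
proof -
  have "orb (card (delta ` S)) \<in> generate G {b}"
    using assms orb_card_delta_image pow_in_generate[OF finite_carrier b_in_carrier] b_in_carrier
    by simp
  then have "generate G {orb (card (delta ` S))} \<subseteq> generate G {b}"
    using generate_subgroup_incl[OF _ generate_is_subgroup] b_in_carrier by simp
  then show ?thesis
    using fixed_subset_generate by blast
qed

lemma card_delta_image_less:
  assumes "card S \<noteq> 1" shows "card (delta ` S) < card S"
proof (rule ccontr)
  have "delta ` S \<subseteq> S"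
    using delta_closed by auto
  moreover assume "\<not> card (delta ` S) < card S"
  ultimately have "delta ` S = S"
    using card_seteq[OF finite_S] by (meson not_less)
  then have "inv b \<in> delta ` S"
    using S.m_inv_closed[OF b_in_S] by simp
  then obtain y where y: "y \<in> S" "delta y = inv b"
    by (metis imageE)
  obtain j where j: "y = orb j"
    using y(1) by (rule obtain_orb)
  have "\<psi> y \<otimes> b = (y \<otimes> inv b) \<otimes> b"
    using psi_eq_delta_mult[OF y(1)] y(2) m_comm[OF inv_closed[OF b_in_carrier] S.mem_carrier[OF y(1)]]
    by simp
  also have "\<dots> = y"
    using b_in_carrier S.mem_carrier[OF y(1)] by (simp add: m_assoc)
  finally have "orb (Suc j) = orb j"
    using j by simp
  then have "orb (Suc j mod card S) = orb (j mod card S)"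
    by (simp only: orb_mod)
  then have "Suc j mod card S = j mod card S"
    by (rule inj_onD[OF inj_on_orb]) (use card_S_pos in auto)
  then have "card S dvd Suc j - j"
    by (metis le_SucI le_refl mod_eq_dvd_iff_nat)
  then show False
    using assms by simp
qed

lemma generate_delta_b_subset: "generate G {delta b} \<subseteq> delta ` S"
  by (rule generate_subgroup_incl) (use b_in_S subgroup_delta_image in auto)

lemma finprod_delta_image_eq_one:
  assumes "card (generate G {delta b}) < card (delta ` S)"
    and "card (delta ` S) \<le> 2 * card (generate G {delta b})"
  shows "(\<Otimes>x\<in>delta ` S. x) = \<one>"
proof -
  interpret D: affine_orbit G "delta ` S" \<psi> "delta b"
    by (rule affine_orbit_delta)
  show ?thesis
  proof (rule finprod_subgroup_eq_one[OF subgroup_delta_image D.finite_S _ generate_delta_b_subset assms])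
    show "subgroup (generate G {delta b}) G"
      using generate_is_subgroup D.b_in_carrier by simp
    show "y [^] card (generate G {delta b}) = \<one>" if "y \<in> delta ` S" for y
      using D.pow_ord_b_eq_one[OF that] generate_pow_card[OF D.b_in_carrier] by simp
  qed
qed

lemma card_le_twice_card_generate_step:
  assumes IH: "card (delta ` S) < card S \<Longrightarrow> card (delta ` S) \<le> 2 * card (generate G {delta b})"
  shows "card S \<le> 2 * card (generate G {b})"
proof -
  let ?B = "generate G {b}" and ?m = "card (delta ` S)" and ?q = "card (generate G {delta b})"
  have B: "card ?B = card (?B \<inter> fixed) * ?q"
    by (rule card_generate_b_eq)
  have q_le_m: "?q \<le> ?m"
    using finite_S generate_delta_b_subset by (simp add: card_mono)
  show ?thesis
  proof (cases "?q = ?m")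
    case True
    have "card S = card fixed * ?q"
      using card_S_eq_card_fixed_mult True by simp
    also have "\<dots> \<le> 2 * card (?B \<inter> fixed) * ?q"
      using card_fixed_le by simp
    also have "\<dots> = 2 * card ?B"
      using B by simp
    finally show ?thesis .
  next
    case False
    have "delta b \<in> carrier G"
      using S.mem_carrier[OF delta_closed[OF b_in_S]] .
    then have "?q > 0"
      using generate_pow_card ord_ge_1[OF finite_carrier] by fastforce
    moreover have "?m \<le> card S"
      by (rule card_mono[OF finite_S]) (auto intro: delta_closed)
    ultimately have m_le: "?m \<le> 2 * ?q"
      using IH card_delta_image_less False q_le_m by linarith
    then have "fixed \<subseteq> ?B"
      using False q_le_m finprod_delta_image_eq_one fixed_subset_generate_b by simp
    then have "card S = card (?B \<inter> fixed) * ?m"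
      using card_S_eq_card_fixed_mult by (simp add: Int_absorb1)
    also have "\<dots> \<le> card (?B \<inter> fixed) * (2 * ?q)"
      using m_le by simp
    also have "\<dots> = 2 * card ?B"
      using B by simp
    finally show ?thesis .
  qed
qed

end

theorem (in comm_group) card_affine_orbit_le:
  "affine_orbit G S \<psi> b \<Longrightarrow> card S \<le> 2 * card (generate G {b})"
proof (induction "card S" arbitrary: S b rule: less_induct)
  case less
  interpret affine_orbit G S \<psi> b
    by (fact less.prems)
  show ?case
  proof (rule card_le_twice_card_generate_step)
    assume "card (delta ` S) < card S"
    then show "card (delta ` S) \<le> 2 * card (generate G {delta b})"
      using less.hyps affine_orbit_delta by blast
  qed
qed

section \<open>Complements of an abelian normal subgroup with cyclic quotient\<close>

lemma (in group) twisted_pow_conj: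
  assumes "k \<in> carrier G" "h \<in> carrier G"
  shows "twisted_pow G (\<lambda>y. k \<otimes> y \<otimes> inv k) (k \<otimes> inv h) t = k [^] t \<otimes> inv (h [^] t)"
proof (induction t)
  case (Suc t)
  have "twisted_pow G (\<lambda>y. k \<otimes> y \<otimes> inv k) (k \<otimes> inv h) (Suc t)
      = (k \<otimes> k [^] t) \<otimes> (inv (h [^] t) \<otimes> inv h)"
    using Suc assms by (simp add: m_assoc inv_solve_left')
  also have "k \<otimes> k [^] t = k [^] Suc t"
    using assms(1) by (rule nat_pow_Suc2[symmetric])
  also have "inv (h [^] t) \<otimes> inv h = inv (h [^] Suc t)"
    using assms(2) by (metis inv_mult_group nat_pow_Suc2 nat_pow_closed)
  finally show ?case .
qed simp

lemma (in group) order_cyclic_quotient_le: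
  assumes "finite (carrier G)" and A: "A \<lhd> G" and cyclic: "cyclic_group (G Mod A)"
    and K: "subgroup K G" and H: "subgroup H G" and "card K = card H"
    and G_eq: "carrier G = K <#> H"
  shows "order (G Mod A) \<le> card H"
proof -
  interpret A: normal A G by (fact A)
  let ?Q = "G Mod A"
  interpret Q: comm_group ?Q
    using A.factorgroup_is_group cyclic by (rule group.cyclic_imp_abelian_group)
  interpret \<pi>: group_hom G ?Q "\<lambda>g. A #> g"
    by (rule A.group_hom_r_coset)
  obtain c where c: "c \<in> carrier ?Q" "subgroup_generated ?Q {c} = ?Q"
    using cyclic by (auto simp: cyclic_group_def)
  then obtain g where g: "g \<in> carrier G" "c = A #> g"
    by (auto simp: FactGroup_def RCOSETS_def)
  then obtain k h where kh: "k \<in> K" "h \<in> H" "g = k \<otimes> h"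
    using G_eq by (auto simp: set_mult_def)
  have kh_carrier: "k \<in> carrier G" "h \<in> carrier G"
    using subgroup.mem_carrier[OF K kh(1)] subgroup.mem_carrier[OF H kh(2)] .
  have "c [^]\<^bsub>?Q\<^esub> card H = (A #> k) [^]\<^bsub>?Q\<^esub> card K \<otimes>\<^bsub>?Q\<^esub> (A #> h) [^]\<^bsub>?Q\<^esub> card H"
    using g kh \<open>card K = card H\<close> \<pi>.hom_mult[OF kh_carrier]
      Q.nat_pow_distrib[OF \<pi>.hom_closed[OF kh_carrier(1)] \<pi>.hom_closed[OF kh_carrier(2)]]
    by simp
  also have "\<dots> = \<one>\<^bsub>?Q\<^esub>"
    using kh K H kh_carrier
    by (simp add: \<pi>.hom_nat_pow[symmetric] pow_card_subgroup_eq_one subgroup_mult_id[OF A.subgroup_axioms])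
  finally have "Q.ord c dvd card H"
    using Q.pow_eq_id[OF c(1)] by simp
  moreover have "order ?Q = Q.ord c"
    using Q.cyclic_order_is_ord[OF c(1)] c(2) by simp
  moreover have "card H > 0"
    using H finite_subset[OF subgroup.subset \<open>finite (carrier G)\<close>] subgroup.one_closed card_gt_0_iff
    by blast
  ultimately show ?thesis
    by (simp add: dvd_imp_le)
qed

lemma (in group) iso_image_complement:
  assumes "s \<in> iso G G" "s ` A = A" "subgroup H G" "H \<inter> A = {\<one>}" "A \<subseteq> carrier G"
  shows "subgroup (s ` H) G" "card (s ` H) = card H" "s ` H \<inter> A = {\<one>}"
proof -
  interpret s: group_hom G G s
    using assms(1) by (simp add: group_hom_def group_hom_axioms_def is_group iso_def)
  have inj: "inj_on s (carrier G)"
    using assms(1) by (simp add: iso_def bij_betw_def)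
  show "subgroup (s ` H) G"
    by (rule s.subgroup_img_is_subgroup[OF assms(3)])
  show "card (s ` H) = card H"
    using card_image inj_on_subset[OF inj subgroup.subset[OF assms(3)]] by blast
  have "s ` H \<inter> s ` A = s ` (H \<inter> A)"
    using inj_on_image_Int[OF inj subgroup.subset[OF assms(3)] assms(5)] by simp
  then show "s ` H \<inter> A = {\<one>}"
    using assms(2,4) by simp
qed

lemma (in group) normal_subgroup_eq_conj_orbit:
  assumes A: "A \<lhd> G" and H: "subgroup H G" "H \<inter> A = {\<one>}" and k: "k \<in> carrier G"
    and h: "h \<in> H" "k \<otimes> inv h \<in> A"
    and G_eq: "carrier G = range (\<lambda>i::nat. k [^] i) <#> H"
  shows "A = range (twisted_pow G (\<lambda>y. k \<otimes> y \<otimes> inv k) (k \<otimes> inv h))"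
proof -
  interpret A: normal A G by (fact A)
  let ?c = "twisted_pow G (\<lambda>y. k \<otimes> y \<otimes> inv k) (k \<otimes> inv h)"
  have h_carrier: "h \<in> carrier G"
    using subgroup.mem_carrier[OF H(1) h(1)] .
  have c_in_A: "?c t \<in> A" for t
    by (induction t) (simp_all add: A.inv_op_closed2 k h(2))
  have "a \<in> range ?c" if a: "a \<in> A" for a
  proof -
    have "a \<in> range (\<lambda>i::nat. k [^] i) <#> H"
      using G_eq A.mem_carrier[OF a] by simp
    then obtain i :: nat and h' where ih: "h' \<in> H" "a = k [^] i \<otimes> h'"
      unfolding set_mult_def by blast
    have h'_carrier: "h' \<in> carrier G"
      using subgroup.mem_carrier[OF H(1) ih(1)] .
    have "inv (?c i) \<otimes> a = h [^] i \<otimes> h'"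
      using ih k h_carrier h'_carrier
      by (simp add: twisted_pow_conj inv_mult_group m_assoc inv_solve_left')
    moreover have "inv (?c i) \<otimes> a \<in> A"
      using c_in_A a by simp
    moreover have "h [^] i \<otimes> h' \<in> H"
      using H(1) h(1) ih(1) by (simp add: subgroup.m_closed subgroup_nat_pow_closed)
    ultimately have "inv (?c i) \<otimes> a = \<one>"
      using H(2) by auto
    then have "a = ?c i"
      using c_in_A[of i] a A.mem_carrier by (simp add: inv_solve_left')
    then show ?thesis
      by simp
  qed
  then show ?thesis
    using c_in_A by blast
qed

lemma (in group) affine_orbit_conj:
  assumes fin: "finite (carrier G)" and A: "A \<lhd> G" "comm_group (G\<lparr>carrier := A\<rparr>)"
    and H: "subgroup H G" "H \<inter> A = {\<one>}" and k: "k \<in> carrier G"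
    and h: "h \<in> H" "k \<otimes> inv h \<in> A"
    and G_eq: "carrier G = range (\<lambda>i::nat. k [^] i) <#> H"
  shows "affine_orbit (G\<lparr>carrier := A\<rparr>) A (\<lambda>y. k \<otimes> y \<otimes> inv k) (k \<otimes> inv h)"
proof (rule affine_orbit.intro[OF A(2) affine_orbit_axioms.intro])
  interpret A: normal A G by (fact A(1))
  let ?M = "G\<lparr>carrier := A\<rparr>" and ?\<psi> = "\<lambda>y. k \<otimes> y \<otimes> inv k"
  show "finite (carrier ?M)"
    using finite_subset[OF A.subset fin] by simp
  show "subgroup A ?M"
    using group.subgroup_self[OF subgroup.subgroup_is_group[OF A.subgroup_axioms is_group]] by simp
  show "?\<psi> x \<in> A" if "x \<in> A" for x
    using that k by (simp add: A.inv_op_closed2)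
  show "?\<psi> (x \<otimes>\<^bsub>?M\<^esub> y) = ?\<psi> x \<otimes>\<^bsub>?M\<^esub> ?\<psi> y" if "x \<in> A" "y \<in> A" for x y
    using that k by (simp add: A.mem_carrier m_assoc inv_mult_cancel_left)
  show "inj_on ?\<psi> A"
    using k by (auto intro!: inj_onI simp: A.mem_carrier)
  show "k \<otimes> inv h \<in> A"
    by (fact h(2))
  show "A = range (twisted_pow ?M ?\<psi> (k \<otimes> inv h))"
    using normal_subgroup_eq_conj_orbit[OF A(1) H k h G_eq] by (simp add: twisted_pow_def)
qed

lemma (in group) complement_bij_betw_quotient:
  assumes "finite (carrier G)" and A: "A \<lhd> G" and L: "subgroup L G" "L \<inter> A = {\<one>}"
    and "order (G Mod A) \<le> card L"
  shows "bij_betw (\<lambda>g. A #> g) L (carrier (G Mod A))"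
proof -
  interpret A: normal A G by (fact A)
  have "inj_on (\<lambda>g. A #> g) L"
  proof (rule inj_onI)
    fix x y assume xy: "x \<in> L" "y \<in> L" "A #> x = A #> y"
    have xy_carrier: "x \<in> carrier G" "y \<in> carrier G"
      using subgroup.mem_carrier[OF L(1)] xy by auto
    have "x \<otimes> inv y \<in> A"
      using r_coset_eq_iff[OF A.subgroup_axioms xy_carrier] xy(3) by simp
    moreover have "x \<otimes> inv y \<in> L"
      using subgroup.m_closed[OF L(1) xy(1) subgroup.m_inv_closed[OF L(1) xy(2)]] .
    ultimately have "x \<otimes> inv y = \<one>"
      using L(2) by blast
    then show "x = y"
      using inv_equality[of x "inv y"] xy_carrier by simp
  qed
  moreover have "(\<lambda>g. A #> g) ` L \<subseteq> carrier (G Mod A)"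
    using subgroup.mem_carrier[OF L(1)] by (auto simp: carrier_FactGroup)
  moreover have "finite (carrier (G Mod A))"
    using assms(1) by (simp add: carrier_FactGroup)
  ultimately have "(\<lambda>g. A #> g) ` L = carrier (G Mod A)"
    using card_seteq assms(5) card_image by (metis order_def)
  with \<open>inj_on (\<lambda>g. A #> g) L\<close> show ?thesis
    by (simp add: bij_betw_def)
qed

lemma (in group_hom) subgroup_eq_powers_if_bij_betw_cyclic:
  assumes "cyclic_group H" "finite (carrier H)" and L: "subgroup L G" "bij_betw h L (carrier H)"
  shows "\<exists>x\<in>L. L = range (\<lambda>i::nat. x [^] i)"
proof -
  obtain c where c: "c \<in> carrier H" "subgroup_generated H {c} = H"
    using assms(1) by (auto simp: cyclic_group_def)
  have "carrier H = carrier (subgroup_generated H {c})"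
    using c(2) by simp
  also have "\<dots> = generate H {c}"
    using c(1) by (simp add: carrier_subgroup_generated)
  finally have H_powers: "carrier H = range (\<lambda>i::nat. c [^]\<^bsub>H\<^esub> i)"
    using H.generate_pow_on_finite_carrier[OF assms(2) c(1)] by auto
  obtain x where x: "x \<in> L" "h x = c"
    using L(2) c(1) by (metis bij_betw_def imageE)
  have "y \<in> range (\<lambda>i::nat. x [^] i)" if y: "y \<in> L" for y
  proof -
    have "h y \<in> carrier H"
      using L(2) y by (auto simp: bij_betw_def)
    then obtain i :: nat where "h y = c [^]\<^bsub>H\<^esub> i"
      using H_powers by auto
    then have "h y = h (x [^] i)"
      using x hom_nat_pow[OF subgroup.mem_carrier[OF L(1) x(1)]] by simp
    then have "y = x [^] i"
      using inj_onD[OF bij_betw_imp_inj_on[OF L(2)]] y G.subgroup_nat_pow_closed[OF L(1) x(1)] by blast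
    then show ?thesis
      by simp
  qed
  then show ?thesis
    using x(1) G.subgroup_nat_pow_closed[OF L(1) x(1)] by blast
qed

lemma (in group) ex_cyclic_subgroup_card_ge_half:
  assumes fin: "finite (carrier G)" and A: "A \<lhd> G" "comm_group (G\<lparr>carrier := A\<rparr>)"
    and cyclic: "cyclic_group (G Mod A)"
    and K: "subgroup K G" "K \<inter> A = {\<one>}" and H: "subgroup H G" "H \<inter> A = {\<one>}"
    and "card K = card H" and G_eq: "carrier G = K <#> H"
  shows "\<exists>b\<in>A. card A \<le> 2 * card (generate G {b})"
proof -
  interpret A: normal A G by (fact A(1))
  interpret \<pi>: group_hom G "G Mod A" "\<lambda>g. A #> g"
    by (rule A.group_hom_r_coset)
  have "order (G Mod A) \<le> card H"
    by (rule order_cyclic_quotient_le[OF fin A(1) cyclic K(1) H(1) \<open>card K = card H\<close> G_eq])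
  then have bij_K: "bij_betw (\<lambda>g. A #> g) K (carrier (G Mod A))"
    and bij_H: "bij_betw (\<lambda>g. A #> g) H (carrier (G Mod A))"
    using complement_bij_betw_quotient[OF fin A(1)] K H \<open>card K = card H\<close> by simp_all
  have "finite (carrier (G Mod A))"
    using fin by (simp add: carrier_FactGroup)
  then obtain k where k: "k \<in> K" "K = range (\<lambda>i::nat. k [^] i)"
    using \<pi>.subgroup_eq_powers_if_bij_betw_cyclic[OF cyclic _ K(1) bij_K] by blast
  have k_carrier: "k \<in> carrier G"
    using subgroup.mem_carrier[OF K(1) k(1)] .
  have "A #> k \<in> (\<lambda>g. A #> g) ` H"
    using bij_H \<pi>.hom_closed[OF k_carrier] by (simp add: bij_betw_def)
  then obtain h where h: "A #> k = A #> h" "h \<in> H"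
    by (rule imageE)
  then have b: "k \<otimes> inv h \<in> A"
    using r_coset_eq_iff[OF A.subgroup_axioms k_carrier subgroup.mem_carrier[OF H(1) h(2)]] by simp
  have "carrier G = range (\<lambda>i::nat. k [^] i) <#> H"
    using G_eq k(2) by simp
  then have "affine_orbit (G\<lparr>carrier := A\<rparr>) A (\<lambda>y. k \<otimes> y \<otimes> inv k) (k \<otimes> inv h)"
    by (rule affine_orbit_conj[OF fin A H k_carrier h(2) b])
  then have "card A \<le> 2 * card (generate (G\<lparr>carrier := A\<rparr>) {k \<otimes> inv h})"
    by (rule comm_group.card_affine_orbit_le[OF A(2)])
  also have "generate (G\<lparr>carrier := A\<rparr>) {k \<otimes> inv h} = generate G {k \<otimes> inv h}"
    using generate_consistent[OF _ A.subgroup_axioms] b by simp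
  finally show ?thesis
    using b by blast
qed

theorem lemma3p15:
  fixes G (structure) and A H :: "'a set" and s :: "'a \<Rightarrow> 'a"
  assumes "group G" and "finite (carrier G)"
    and "A \<lhd> G" and "comm_group (G\<lparr>carrier := A\<rparr>)"
    and "cyclic_group (G Mod A)"
    and "s \<in> iso G G"
    and "\<forall>x \<in> carrier G. s (s x) = x" and "\<exists>x \<in> carrier G. s x \<noteq> x"
    and "s ` A = A"
    and "subgroup H G" and "H \<inter> A = {\<one>}"
    and "carrier G = (s ` H) <#> H"
  shows "\<exists>C. subgroup C G \<and> C \<subseteq> A \<and> cyclic_group (subgroup_generated G C)
             \<and> card A \<le> 2 * card C"
proof -
  interpret group G by (fact assms(1))
  interpret A: normal A G by (fact assms(3))
  note K = iso_image_complement[OF assms(6,9,10,11) A.subset]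
  obtain b where b: "b \<in> A" "card A \<le> 2 * card (generate G {b})"
    using ex_cyclic_subgroup_card_ge_half[OF assms(2-5) K(1,3) assms(10,11) K(2) assms(12)] by blast
  have "subgroup (generate G {b}) G" "generate G {b} \<subseteq> A"
    using generate_is_subgroup generate_subgroup_incl[OF _ A.subgroup_axioms] b(1) A.mem_carrier by auto
  then show ?thesis
    using cyclic_group_subgroup_generated_generate[OF A.mem_carrier[OF b(1)]] b(2) by blast
qed

end
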